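(* Let $X_1,\dots,X_n\in\mathbb{R}$, $Y\in\mathbb{R}^n$ and $\lambda\ge 0$. The univariate LISO problem $$\min_{\theta\in\mathcal{M}}\ \tfrac12\|Y-\theta\|^2+\lambda\big(\max_i\theta_i-\min_i\theta_i\big)$$ has a unique solution $\hat\theta_\lambda$, and there exist thresholds $A_\lambda\le B_\lambda$ (with $A_\lambda,B_\lambda\in[-\infty,\infty]$) such that $\hat\theta_\lambda=\hat\theta^{>A_\lambda,<B_\lambda}$, i.e. $(\hat\theta_\lambda)_i=\min\{B_\lambda,\max\{A_\lambda,\hat\theta^{\mathrm{PAVA}}_i\}\}$ for all $i$.
   Context: $\mathcal{M}$ denotes the set of vectors $\theta\in\mathbb{R}^n$ that are monotone in $X$: $\theta_i\le\theta_j$ whenever $X_i<X_j$, and $\theta_i=\theta_j$ whenever $X_i=X_j$. The PAVA fit $\hat\theta^{\mathrm{PAVA}}$ is the unique minimiser of $\|Y-\theta\|^2$ over $\theta\in\mathcal{M}$. For $A\le B$, the Winsorized PAVA vector $\hat\theta^{>A,<B}$ is obtained by replacing entries of $\hat\theta^{\mathrm{PAVA}}$ below $A$ by $A$ and entries above $B$ by $B$. *)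

theory Defs
  imports "HOL-Analysis.Analysis" "HOL-Library.Extended_Real"
begin

text \<open>Vectors in R^n are represented as functions nat => real that vanish
  outside the index set {..<n} (so that they are determined by n coordinates).\<close>

definition monoset :: "nat \<Rightarrow> (nat \<Rightarrow> real) \<Rightarrow> (nat \<Rightarrow> real) set" where
  "monoset n X = {\<theta>. (\<forall>i. n \<le> i \<longrightarrow> \<theta> i = 0) \<and>
      (\<forall>i<n. \<forall>j<n. (X i < X j \<longrightarrow> \<theta> i \<le> \<theta> j) \<and> (X i = X j \<longrightarrow> \<theta> i = \<theta> j))}"

definition sqdist :: "nat \<Rightarrow> (nat \<Rightarrow> real) \<Rightarrow> (nat \<Rightarrow> real) \<Rightarrow> real" where
  "sqdist n Y \<theta> = (\<Sum>i<n. (Y i - \<theta> i)\<^sup>2)"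

definition pava :: "nat \<Rightarrow> (nat \<Rightarrow> real) \<Rightarrow> (nat \<Rightarrow> real) \<Rightarrow> (nat \<Rightarrow> real)" where
  "pava n X Y = (THE \<theta>. \<theta> \<in> monoset n X \<and>
      (\<forall>\<eta>\<in>monoset n X. sqdist n Y \<theta> \<le> sqdist n Y \<eta>))"

definition liso_obj :: "nat \<Rightarrow> (nat \<Rightarrow> real) \<Rightarrow> real \<Rightarrow> (nat \<Rightarrow> real) \<Rightarrow> real" where
  "liso_obj n Y lam \<theta> = sqdist n Y \<theta> / 2 +
      lam * (Max (\<theta> ` {..<n}) - Min (\<theta> ` {..<n}))"

end

theory Submission
  imports Defs
begin

(* Write K for the cone of vectors that are monotone in X
   and vanish outside {..<n}, L for the LISO objective 1/2 |Y-theta|^2 + lam * spread(theta)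
   and p for the PAVA fit.
   (1) K is closed and convex, and L is continuous and coercive, so L attains its minimum on K;
       L is strictly convex (the squared distance is strictly convex along segments and the
       spread is convex), so the minimiser is unique.  The case lam = 0 shows that p is the
       unique Euclidean projection of Y onto K.
   (2) As a projection onto a convex set, p satisfies the variational inequality
       <Y - p, eta - p> <= 0 for every eta in K.
   (3) Let theta minimise L, with range [m, M], and let c be p clipped to [m, M].  Clipping
       x |-> clip x and x |-> 2x - clip x are monotone maps, so c and 2p - c lie in K; the
       variational inequality at theta and at 2p - c, together with |c - p| <= |theta - p|
       coordinatewise, gives |Y - c| <= |Y - theta|.  The spread of c is at most M - m, so
       L c <= L theta, and uniqueness forces theta = c, i.e. theta is Winsorized PAVA. *)

section \<open>Continuity of the objective\<close>

lemma continuous_on_Max_finite: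
  fixes f :: "'i \<Rightarrow> 'a::topological_space \<Rightarrow> 'b::linorder_topology"
  assumes "finite I" "I \<noteq> {}" "\<And>i. i \<in> I \<Longrightarrow> continuous_on S (f i)"
  shows "continuous_on S (\<lambda>x. Max ((\<lambda>i. f i x) ` I))"
  using assms
proof (induction I rule: finite_ne_induct)
  case (insert j F)
  have "continuous_on S (\<lambda>x. max (f j x) (Max ((\<lambda>i. f i x) ` F)))"
    using insert by (intro continuous_on_max) auto
  then show ?case
    using insert.hyps by (simp add: Max.insert)
qed simp

lemma continuous_on_Min_finite:
  fixes f :: "'i \<Rightarrow> 'a::topological_space \<Rightarrow> 'b::linorder_topology"
  assumes "finite I" "I \<noteq> {}" "\<And>i. i \<in> I \<Longrightarrow> continuous_on S (f i)"
  shows "continuous_on S (\<lambda>x. Min ((\<lambda>i. f i x) ` I))"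
  using assms
proof (induction I rule: finite_ne_induct)
  case (insert j F)
  have "continuous_on S (\<lambda>x. min (f j x) (Min ((\<lambda>i. f i x) ` F)))"
    using insert by (intro continuous_on_min) auto
  then show ?case
    using insert.hyps by (simp add: Min.insert)
qed simp

lemma continuous_on_coordinate: "continuous_on S (\<lambda>x::'i \<Rightarrow> real. x i)"
  by (rule continuous_on_subset[OF continuous_on_product_coordinates]) simp

definition spread :: "nat \<Rightarrow> (nat \<Rightarrow> real) \<Rightarrow> real" where
  "spread n x = Max (x ` {..<n}) - Min (x ` {..<n})"

lemma liso_obj_spread: "liso_obj n Y lam x = sqdist n Y x / 2 + lam * spread n x"
  by (simp add: liso_obj_def spread_def)

lemma spread_nonneg:
  assumes "n \<ge> 1"
  shows "spread n x \<ge> 0"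
proof -
  have "Min (x ` {..<n}) \<le> x 0" "x 0 \<le> Max (x ` {..<n})"
    using assms by auto
  then show ?thesis unfolding spread_def by simp
qed

lemma liso_obj_ge_sqdist:
  assumes "n \<ge> 1" "lam \<ge> 0"
  shows "sqdist n Y x / 2 \<le> liso_obj n Y lam x"
  using spread_nonneg[OF assms(1), of x] assms(2) unfolding liso_obj_spread by simp

lemma continuous_on_liso_obj:
  assumes "n \<ge> 1"
  shows "continuous_on UNIV (liso_obj n Y lam)"
proof -
  have ne: "finite {..<n}" "{..<n} \<noteq> {}"
    using assms by (auto simp: lessThan_empty_iff)
  have "continuous_on UNIV (\<lambda>x::nat \<Rightarrow> real. (\<Sum>i<n. (Y i - x i)\<^sup>2) / 2 +
          lam * (Max ((\<lambda>i. x i) ` {..<n}) - Min ((\<lambda>i. x i) ` {..<n})))"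
    by (intro continuous_intros continuous_on_coordinate
        continuous_on_Max_finite[OF ne] continuous_on_Min_finite[OF ne]) auto
  then show ?thesis
    by (simp add: liso_obj_def sqdist_def)
qed

section \<open>The monotone cone\<close>

lemma monosetI:
  assumes "\<And>i. n \<le> i \<Longrightarrow> \<theta> i = 0"
    "\<And>i j. i < n \<Longrightarrow> j < n \<Longrightarrow> X i < X j \<Longrightarrow> \<theta> i \<le> \<theta> j"
    "\<And>i j. i < n \<Longrightarrow> j < n \<Longrightarrow> X i = X j \<Longrightarrow> \<theta> i = \<theta> j"
  shows "\<theta> \<in> monoset n X"
  unfolding monoset_def using assms by blast

lemma monosetD:
  assumes "\<theta> \<in> monoset n X"
  shows "\<And>i. n \<le> i \<Longrightarrow> \<theta> i = 0"
    "\<And>i j. i < n \<Longrightarrow> j < n \<Longrightarrow> X i < X j \<Longrightarrow> \<theta> i \<le> \<theta> j"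
    "\<And>i j. i < n \<Longrightarrow> j < n \<Longrightarrow> X i = X j \<Longrightarrow> \<theta> i = \<theta> j"
  using assms unfolding monoset_def by blast+

lemma zero_in_monoset: "(\<lambda>i. 0) \<in> monoset n X"
  by (rule monosetI) auto

lemma monoset_closed: "closed (monoset n X)"
  unfolding monoset_def
  by (intro closed_Collect_conj closed_Collect_all closed_Collect_imp open_Collect_const
      closed_Collect_le closed_Collect_eq continuous_on_coordinate continuous_on_const)

lemma monoset_convex:
  assumes "a \<in> monoset n X" "b \<in> monoset n X" "0 \<le> t" "t \<le> 1"
  shows "(\<lambda>i. (1 - t) * a i + t * b i) \<in> monoset n X"
proof (rule monosetI)
  fix i j assume ij: "i < n" "j < n" "X i < X j"
  have "a i \<le> a j" "b i \<le> b j"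
    using monosetD(2)[OF assms(1) ij] monosetD(2)[OF assms(2) ij] by auto
  then show "(1 - t) * a i + t * b i \<le> (1 - t) * a j + t * b j"
    using assms(3,4) by (intro add_mono mult_left_mono) auto
next
  fix i assume "n \<le> i"
  then show "(1 - t) * a i + t * b i = 0"
    using monosetD(1)[OF assms(1)] monosetD(1)[OF assms(2)] by simp
next
  fix i j assume ij: "i < n" "j < n" "X i = X j"
  then show "(1 - t) * a i + t * b i = (1 - t) * a j + t * b j"
    using monosetD(3)[OF assms(1) ij] monosetD(3)[OF assms(2) ij] by simp
qed

lemma monoset_map_mono:
  assumes "mono f" "\<theta> \<in> monoset n X"
  shows "(\<lambda>i. if i < n then f (\<theta> i) else 0) \<in> monoset n X"
proof (rule monosetI)
  fix i j assume ij: "i < n" "j < n" "X i < X j"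
  then have "f (\<theta> i) \<le> f (\<theta> j)"
    using monoD[OF assms(1) monosetD(2)[OF assms(2) ij]] by simp
  with ij show "(if i < n then f (\<theta> i) else 0) \<le> (if j < n then f (\<theta> j) else 0)"
    by simp
next
  fix i j assume ij: "i < n" "j < n" "X i = X j"
  then show "(if i < n then f (\<theta> i) else 0) = (if j < n then f (\<theta> j) else 0)"
    using monosetD(3)[OF assms(2) ij] by simp
qed simp

section \<open>Existence and uniqueness of minimisers\<close>

lemma attains_min_coercive:
  fixes f :: "'a::topological_space \<Rightarrow> real"
  assumes "closed K" "compact B" "x0 \<in> K \<inter> B" "continuous_on UNIV f"
    and outside: "\<And>x. x \<in> K \<Longrightarrow> x \<notin> B \<Longrightarrow> f x0 \<le> f x"
  shows "\<exists>\<theta>\<in>K. \<forall>\<eta>\<in>K. f \<theta> \<le> f \<eta>"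
proof -
  obtain \<theta> where \<theta>: "\<theta> \<in> K \<inter> B" and min: "\<forall>y\<in>K \<inter> B. f \<theta> \<le> f y"
    using continuous_attains_inf[of "K \<inter> B" f] assms(1-4)
    by (metis closed_Int_compact continuous_on_subset empty_iff subset_UNIV)
  have "f \<theta> \<le> f \<eta>" if "\<eta> \<in> K" for \<eta>
  proof (cases "\<eta> \<in> B")
    case False
    then have "f x0 \<le> f \<eta>" using outside that by blast
    moreover have "f \<theta> \<le> f x0" using min assms(3) by blast
    ultimately show ?thesis by linarith
  qed (use min that in blast)
  with \<theta> show ?thesis by blast
qed

lemma compact_PiE_UNIV:
  assumes "\<And>i. compact (S i :: real set)"
  shows "compact (PiE UNIV S)"
proof -
  have "compactin (product_topology (\<lambda>i. euclidean) UNIV) (PiE UNIV S)"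
    using assms by (subst compactin_PiE) auto
  then show ?thesis by (simp add: euclidean_product_topology)
qed

lemma sqdist_nonneg: "0 \<le> sqdist n Y \<eta>"
  unfolding sqdist_def by (intro sum_nonneg) simp

lemma sqdist_ge_coordinate:
  assumes "i < n"
  shows "(Y i - \<eta> i)\<^sup>2 \<le> sqdist n Y \<eta>"
  unfolding sqdist_def using assms by (intro member_le_sum) auto

text \<open>Existence: outside a large box around Y, half the squared distance alone already
  exceeds the objective at the zero vector.\<close>

lemma liso_minimiser_exists:
  assumes n: "n \<ge> 1" and lam: "lam \<ge> 0"
  shows "\<exists>\<theta>\<in>monoset n X. \<forall>\<eta>\<in>monoset n X. liso_obj n Y lam \<theta> \<le> liso_obj n Y lam \<eta>"
proof -
  define c where "c = liso_obj n Y lam (\<lambda>i. 0)"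
  define r where "r = 2 * c + 1"
  define S where "S = (\<lambda>i. if i < n then {- (\<bar>Y i\<bar> + r) .. \<bar>Y i\<bar> + r} else {0::real})"
  have c: "c \<ge> 0"
    using liso_obj_ge_sqdist[OF n lam, of Y "\<lambda>i. 0"] sqdist_nonneg[of n Y "\<lambda>i. 0"]
    unfolding c_def by linarith
  have r: "r \<ge> 1" "2 * c < r\<^sup>2"
  proof -
    show r1: "r \<ge> 1" using c unfolding r_def by simp
    have "r * 1 \<le> r * r" using r1 by (intro mult_left_mono) auto
    then show "2 * c < r\<^sup>2" unfolding r_def by (simp add: power2_eq_square)
  qed
  have mem: "x \<in> PiE UNIV S \<longleftrightarrow> (\<forall>i. x i \<in> S i)" for x
    by (auto simp: PiE_UNIV_domain)
  have "liso_obj n Y lam (\<lambda>i. 0) \<le> liso_obj n Y lam \<eta>"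
    if \<eta>: "\<eta> \<in> monoset n X" "\<eta> \<notin> PiE UNIV S" for \<eta>
  proof -
    obtain i where i: "\<eta> i \<notin> S i" using mem \<eta>(2) by blast
    have "i < n"
      using i monosetD(1)[OF \<eta>(1), of i] by (cases "i < n") (auto simp: S_def)
    with i have "\<bar>Y i\<bar> + r < \<bar>\<eta> i\<bar>" by (auto simp: S_def)
    then have "r < \<bar>Y i - \<eta> i\<bar>" by arith
    then have "r\<^sup>2 < \<bar>Y i - \<eta> i\<bar>\<^sup>2"
      by (rule power_strict_mono) (use r(1) in auto)
    then have "c < sqdist n Y \<eta> / 2"
      using sqdist_ge_coordinate[OF \<open>i < n\<close>, of Y \<eta>] r(2) by simp
    then show ?thesis
      using liso_obj_ge_sqdist[OF n lam, of Y \<eta>] unfolding c_def by linarith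
  qed
  moreover have "(\<lambda>i. 0) \<in> monoset n X \<inter> PiE UNIV S"
    using zero_in_monoset mem r(1) by (auto simp: S_def)
  moreover have "compact (PiE UNIV S)"
    by (rule compact_PiE_UNIV) (simp add: S_def)
  ultimately show ?thesis
    using attains_min_coercive[OF monoset_closed _ _ continuous_on_liso_obj[OF n]] by blast
qed

text \<open>Strict convexity along the midpoint: the squared distance of the midpoint loses a
  quarter of the squared distance between the two points; the spread is midpoint convex.\<close>

lemma square_dist_midpoint:
  fixes y a b :: real
  shows "(y - (a + b) / 2)\<^sup>2 = ((y - a)\<^sup>2 + (y - b)\<^sup>2) / 2 - (a - b)\<^sup>2 / 4"
  by (simp add: power2_eq_square field_simps)

lemma sqdist_midpoint:
  "sqdist n Y (\<lambda>i. (a i + b i) / 2) =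
     (sqdist n Y a + sqdist n Y b) / 2 - (\<Sum>i<n. (a i - b i)\<^sup>2) / 4"
  unfolding sqdist_def square_dist_midpoint
  by (simp add: sum_subtractf sum.distrib flip: sum_divide_distrib)

lemma spread_midpoint:
  assumes "n \<ge> 1"
  shows "spread n (\<lambda>i. (a i + b i) / 2) \<le> (spread n a + spread n b) / 2"
proof -
  have fin: "finite {..<n}" "{..<n} \<noteq> {}" using assms by (auto simp: lessThan_empty_iff)
  have "Max ((\<lambda>i. (a i + b i) / 2) ` {..<n}) \<in> (\<lambda>i. (a i + b i) / 2) ` {..<n}"
    by (rule Max_in) (use fin in auto)
  then obtain k where k: "k < n" "Max ((\<lambda>i. (a i + b i) / 2) ` {..<n}) = (a k + b k) / 2"
    by auto
  have "Min ((\<lambda>i. (a i + b i) / 2) ` {..<n}) \<in> (\<lambda>i. (a i + b i) / 2) ` {..<n}"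
    by (rule Min_in) (use fin in auto)
  then obtain l where l: "l < n" "Min ((\<lambda>i. (a i + b i) / 2) ` {..<n}) = (a l + b l) / 2"
    by auto
  have "a k \<le> Max (a ` {..<n})" "b k \<le> Max (b ` {..<n})"
       "Min (a ` {..<n}) \<le> a l" "Min (b ` {..<n}) \<le> b l"
    using k(1) l(1) by auto
  then show ?thesis unfolding spread_def k(2) l(2) by (simp add: field_simps)
qed

lemma liso_minimiser_unique:
  assumes n: "n \<ge> 1" and lam: "lam \<ge> 0"
    and a: "a \<in> monoset n X" "\<forall>\<eta>\<in>monoset n X. liso_obj n Y lam a \<le> liso_obj n Y lam \<eta>"
    and b: "b \<in> monoset n X" "\<forall>\<eta>\<in>monoset n X. liso_obj n Y lam b \<le> liso_obj n Y lam \<eta>"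
  shows "a = b"
proof -
  define mid where "mid = (\<lambda>i. (a i + b i) / 2)"
  define D where "D = (\<Sum>i<n. (a i - b i)\<^sup>2)"
  have "mid \<in> monoset n X"
    using monoset_convex[OF a(1) b(1), of "1/2"] by (simp add: mid_def add_divide_distrib)
  then have "liso_obj n Y lam a \<le> liso_obj n Y lam mid" "liso_obj n Y lam a = liso_obj n Y lam b"
    using a b by (auto intro: order.antisym)
  moreover have "lam * spread n mid \<le> lam * ((spread n a + spread n b) / 2)"
    using spread_midpoint[OF n] lam unfolding mid_def by (rule mult_left_mono)
  ultimately have "D \<le> 0"
    using sqdist_midpoint[of n Y a b] unfolding liso_obj_spread mid_def D_def
    by (simp add: field_simps)
  then have "D = 0"
    unfolding D_def by (intro order.antisym sum_nonneg) auto
  then have "a i = b i" if "i < n" for i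
    using that unfolding D_def by (subst (asm) sum_nonneg_eq_0_iff) auto
  then show "a = b"
    using monosetD(1)[OF a(1)] monosetD(1)[OF b(1)] by (intro ext) (metis not_less)
qed

section \<open>The PAVA fit as a projection\<close>

lemma pava_minimises:
  assumes n: "n \<ge> 1"
  shows "pava n X Y \<in> monoset n X"
    and "\<forall>\<eta>\<in>monoset n X. sqdist n Y (pava n X Y) \<le> sqdist n Y \<eta>"
proof -
  have sq: "liso_obj n Y 0 = (\<lambda>\<theta>. sqdist n Y \<theta> / 2)"
    by (simp add: fun_eq_iff liso_obj_spread)
  obtain \<theta> where "\<theta> \<in> monoset n X" "\<forall>\<eta>\<in>monoset n X. sqdist n Y \<theta> \<le> sqdist n Y \<eta>"
    using liso_minimiser_exists[OF n order.refl, of X Y] unfolding sq by auto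
  moreover have "a = b"
    if "a \<in> monoset n X" "\<forall>\<eta>\<in>monoset n X. sqdist n Y a \<le> sqdist n Y \<eta>"
      "b \<in> monoset n X" "\<forall>\<eta>\<in>monoset n X. sqdist n Y b \<le> sqdist n Y \<eta>" for a b
    by (rule liso_minimiser_unique[OF n order.refl, of a X Y b]) (use that in \<open>simp_all add: sq\<close>)
  ultimately have "\<exists>!\<theta>. \<theta> \<in> monoset n X \<and> (\<forall>\<eta>\<in>monoset n X. sqdist n Y \<theta> \<le> sqdist n Y \<eta>)"
    by blast
  then have "pava n X Y \<in> monoset n X \<and> (\<forall>\<eta>\<in>monoset n X. sqdist n Y (pava n X Y) \<le> sqdist n Y \<eta>)"
    unfolding pava_def by (rule theI')
  then show "pava n X Y \<in> monoset n X" "\<forall>\<eta>\<in>monoset n X. sqdist n Y (pava n X Y) \<le> sqdist n Y \<eta>"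
    by auto
qed

lemma sqdist_expand:
  "sqdist n Y z = sqdist n Y p - 2 * (\<Sum>i<n. (Y i - p i) * (z i - p i)) + (\<Sum>i<n. (z i - p i)\<^sup>2)"
proof -
  have "sqdist n Y z = (\<Sum>i<n. (Y i - p i)\<^sup>2 - 2 * ((Y i - p i) * (z i - p i)) + (z i - p i)\<^sup>2)"
    unfolding sqdist_def by (rule sum.cong) (simp_all add: power2_eq_square algebra_simps)
  then show ?thesis
    by (simp add: sqdist_def sum.distrib sum_subtractf sum_distrib_left)
qed

lemma nonpos_of_quadratic_bound:
  fixes s q :: real
  assumes bound: "\<And>t. 0 < t \<Longrightarrow> t \<le> 1 \<Longrightarrow> 2 * s \<le> t * q"
  shows "s \<le> 0"
proof (rule ccontr)
  assume "\<not> s \<le> 0"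
  then have s: "s > 0" by simp
  then have q: "q > 0" using bound[of 1] by simp
  define t where "t = min 1 (s / q)"
  have t: "0 < t" "t \<le> 1" "t * q \<le> s"
    unfolding t_def using s q by (auto simp: min_def field_simps)
  from bound[OF t(1,2)] t(3) s show False by linarith
qed

lemma projection_variational_inequality:
  assumes min: "\<forall>z\<in>K. sqdist n Y p \<le> sqdist n Y z"
    and segment: "\<And>t. 0 \<le> t \<Longrightarrow> t \<le> 1 \<Longrightarrow> (\<lambda>i. (1 - t) * p i + t * \<eta> i) \<in> K"
  shows "(\<Sum>i<n. (Y i - p i) * (\<eta> i - p i)) \<le> 0"
proof (rule nonpos_of_quadratic_bound)
  fix t :: real assume t: "0 < t" "t \<le> 1"
  define s where "s = (\<Sum>i<n. (Y i - p i) * (\<eta> i - p i))"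
  define q where "q = (\<Sum>i<n. (\<eta> i - p i)\<^sup>2)"
  define z where "z = (\<lambda>i. (1 - t) * p i + t * \<eta> i)"
  have "(\<Sum>i<n. (Y i - p i) * (z i - p i)) = t * s"
    unfolding s_def z_def sum_distrib_left by (rule sum.cong) (simp_all add: algebra_simps)
  moreover have "(\<Sum>i<n. (z i - p i)\<^sup>2) = t\<^sup>2 * q"
    unfolding q_def z_def sum_distrib_left by (rule sum.cong) (simp_all add: power2_eq_square algebra_simps)
  moreover have "sqdist n Y p \<le> sqdist n Y z"
    using min segment t unfolding z_def by simp
  ultimately have "t * (2 * s) \<le> t * (t * q)"
    using sqdist_expand[of n Y z p] by (simp add: power2_eq_square)
  then show "2 * s \<le> t * q"
    using t(1) by (rule mult_left_le_imp_le)
qed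

section \<open>Clipping\<close>

definition clip :: "real \<Rightarrow> real \<Rightarrow> real \<Rightarrow> real" where
  "clip m M x = min M (max m x)"

lemma mono_clip: "mono (clip m M)"
  by (rule monoI) (simp add: clip_def min_def max_def)

text \<open>Clipping is 1-Lipschitz and nondecreasing, so reflecting through it stays monotone.\<close>

lemma mono_reflect_clip:
  assumes "m \<le> M"
  shows "mono (\<lambda>x. 2 * x - clip m M x)"
  by (rule monoI) (use assms in \<open>simp add: clip_def min_def max_def\<close>)

lemma clip_closest:
  assumes "m \<le> y" "y \<le> M"
  shows "\<bar>clip m M x - x\<bar> \<le> \<bar>y - x\<bar>"
  using assms by (simp add: clip_def min_def max_def abs_if)

lemma sqdist_clipped_pava_le:
  fixes Y :: "nat \<Rightarrow> real"
  assumes n: "n \<ge> 1" and mM: "m \<le> M"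
    and \<theta>: "\<theta> \<in> monoset n X" "\<And>i. i < n \<Longrightarrow> m \<le> \<theta> i \<and> \<theta> i \<le> M"
  defines "p \<equiv> pava n X Y"
  defines "c \<equiv> \<lambda>i. if i < n then clip m M (p i) else 0"
  shows "sqdist n Y c \<le> sqdist n Y \<theta>"
proof -
  note p = pava_minimises[OF n, of X Y, folded p_def]
  define d where "d = (\<lambda>i. if i < n then 2 * p i - clip m M (p i) else 0)"
  have d: "d \<in> monoset n X"
    unfolding d_def by (rule monoset_map_mono[OF mono_reflect_clip[OF mM] p(1)])
  have segment: "(\<lambda>i. (1 - t) * p i + t * \<eta> i) \<in> monoset n X"
    if "\<eta> \<in> monoset n X" "0 \<le> t" "t \<le> 1" for \<eta> t
    using monoset_convex[OF p(1) that] .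
  have vi_\<theta>: "(\<Sum>i<n. (Y i - p i) * (\<theta> i - p i)) \<le> 0"
    by (rule projection_variational_inequality[OF p(2) segment[OF \<theta>(1)]])
  have "(\<Sum>i<n. (Y i - p i) * (d i - p i)) \<le> 0"
    by (rule projection_variational_inequality[OF p(2) segment[OF d]])
  moreover have "(\<Sum>i<n. (Y i - p i) * (d i - p i)) = - (\<Sum>i<n. (Y i - p i) * (c i - p i))"
    unfolding sum_negf[symmetric] by (rule sum.cong) (simp_all add: c_def d_def algebra_simps)
  ultimately have vi_c: "0 \<le> (\<Sum>i<n. (Y i - p i) * (c i - p i))" by simp
  have "(c i - p i)\<^sup>2 \<le> (\<theta> i - p i)\<^sup>2" if "i < n" for i
    using clip_closest[of m "\<theta> i" M "p i"] \<theta>(2)[OF that] that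
    by (simp add: c_def abs_le_square_iff)
  then have "(\<Sum>i<n. (c i - p i)\<^sup>2) \<le> (\<Sum>i<n. (\<theta> i - p i)\<^sup>2)"
    by (intro sum_mono) simp
  then show ?thesis
    using vi_\<theta> vi_c sqdist_expand[of n Y c p] sqdist_expand[of n Y \<theta> p] by linarith
qed

lemma liso_minimiser_clips_pava:
  assumes n: "n \<ge> 1" and lam: "lam \<ge> 0"
    and \<theta>: "\<theta> \<in> monoset n X" "\<forall>\<eta>\<in>monoset n X. liso_obj n Y lam \<theta> \<le> liso_obj n Y lam \<eta>"
  defines "m \<equiv> Min (\<theta> ` {..<n})" and "M \<equiv> Max (\<theta> ` {..<n})"
  shows "m \<le> M" and "\<And>i. i < n \<Longrightarrow> \<theta> i = clip m M (pava n X Y i)"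
proof -
  have range: "m \<le> \<theta> i \<and> \<theta> i \<le> M" if "i < n" for i
    using that unfolding m_def M_def by auto
  show mM: "m \<le> M" using range[of 0] n by auto
  define c where "c = (\<lambda>i. if i < n then clip m M (pava n X Y i) else 0)"
  have c: "c \<in> monoset n X"
    unfolding c_def by (rule monoset_map_mono[OF mono_clip pava_minimises(1)[OF n]])
  have "Max (c ` {..<n}) \<le> M"
    using n mM by (intro Max.boundedI) (auto simp: c_def clip_def lessThan_empty_iff)
  moreover have "m \<le> Min (c ` {..<n})"
    using n mM by (intro Min.boundedI) (auto simp: c_def clip_def lessThan_empty_iff)
  ultimately have "lam * spread n c \<le> lam * spread n \<theta>"
    using lam unfolding spread_def m_def M_def by (intro mult_left_mono) auto
  then have "liso_obj n Y lam c \<le> liso_obj n Y lam \<theta>"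
    using sqdist_clipped_pava_le[OF n mM \<theta>(1) range, of Y] unfolding liso_obj_spread c_def
    by linarith
  then have "c = \<theta>"
    using liso_minimiser_unique[OF n lam c _ \<theta>] \<theta>(2) by fastforce
  then show "\<theta> i = clip m M (pava n X Y i)" if "i < n" for i
    using that unfolding c_def by auto
qed

theorem theorem1:
  fixes n :: nat and X Y :: "nat \<Rightarrow> real" and lam :: real
  assumes "n \<ge> 1" and "lam \<ge> 0"
  shows "(\<exists>!\<theta>. \<theta> \<in> monoset n X \<and>
            (\<forall>\<eta>\<in>monoset n X. liso_obj n Y lam \<theta> \<le> liso_obj n Y lam \<eta>)) \<and>
         (\<forall>\<theta>. (\<theta> \<in> monoset n X \<and>
            (\<forall>\<eta>\<in>monoset n X. liso_obj n Y lam \<theta> \<le> liso_obj n Y lam \<eta>)) \<longrightarrow>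
            (\<exists>A B :: ereal. A \<le> B \<and>
               (\<forall>i<n. ereal (\<theta> i) = min B (max A (ereal (pava n X Y i))))))"
proof (intro conjI allI impI)
  show "\<exists>!\<theta>. \<theta> \<in> monoset n X \<and> (\<forall>\<eta>\<in>monoset n X. liso_obj n Y lam \<theta> \<le> liso_obj n Y lam \<eta>)"
    using liso_minimiser_exists[OF assms] liso_minimiser_unique[OF assms] by blast
next
  fix \<theta> assume "\<theta> \<in> monoset n X \<and> (\<forall>\<eta>\<in>monoset n X. liso_obj n Y lam \<theta> \<le> liso_obj n Y lam \<eta>)"
  then have \<theta>: "\<theta> \<in> monoset n X" "\<forall>\<eta>\<in>monoset n X. liso_obj n Y lam \<theta> \<le> liso_obj n Y lam \<eta>"
    by auto
  define m where "m = Min (\<theta> ` {..<n})"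
  define M where "M = Max (\<theta> ` {..<n})"
  note clipped = liso_minimiser_clips_pava[OF assms \<theta>, folded m_def M_def]
  show "\<exists>A B :: ereal. A \<le> B \<and> (\<forall>i<n. ereal (\<theta> i) = min B (max A (ereal (pava n X Y i))))"
  proof (intro exI conjI allI impI)
    show "ereal m \<le> ereal M" using clipped(1) by simp
    fix i assume "i < n"
    then show "ereal (\<theta> i) = min (ereal M) (max (ereal m) (ereal (pava n X Y i)))"
      by (simp add: clipped(2) clip_def)
  qed
qed

end
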